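(* Let $f:\mathbb{R}^n\to\mathbb{R}^m$, $F:\mathbb{R}^n\rightrightarrows\mathbb{R}^m$, $\bar x\in\mathbb{R}^n$ and $\bar v\in(f+F)(\bar x)$. Assume $f$ is calm at $\bar x$: there exist $\ell>0$ and a neighborhood $U$ of $\bar x$ with $\|f(x)-f(\bar x)\|\le\ell\|x-\bar x\|$ for all $x\in U$. Then $$\widehat D^*f(\bar x)(w)+\widehat D^*F\big(\bar x,\bar v-f(\bar x)\big)(w)\subset\widehat D^*(f+F)(\bar x,\bar v)(w)\quad\text{for all }w\in\mathbb{R}^m.$$ If in addition $f$ is Fréchet differentiable at $\bar x$, this inclusion holds as an equality.
   Context: Regular normal cone: $\widehat N_\Omega(\bar z):=\{v:\limsup_{z\to\bar z,\,z\in\Omega}\frac{\langle v,z-\bar z\rangle}{\|z-\bar z\|}\le0\}$. Regular coderivative of $F:\mathbb{R}^n\rightrightarrows\mathbb{R}^m$ at $(\bar x,\bar y)\in\operatorname{gph}F$: $\widehat D^*F(\bar x,\bar y)(w):=\{v:(v,-w)\in\widehat N_{\operatorname{gph}F}(\bar x,\bar y)\}$; for single-valued $f$, $\widehat D^*f(\bar x):=\widehat D^*f(\bar x,f(\bar x))$. $(f+F)(x):=f(x)+F(x)$. *)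

theory Defs
  imports "HOL-Analysis.Analysis"
begin

definition regular_normal_cone :: "'a::real_inner set \<Rightarrow> 'a \<Rightarrow> 'a set" where
  "regular_normal_cone \<Omega> zbar =
     {v. Limsup (at zbar within \<Omega>) (\<lambda>z. ereal (inner v (z - zbar) / norm (z - zbar))) \<le> 0}"

definition graph :: "('a \<Rightarrow> 'b set) \<Rightarrow> ('a \<times> 'b) set" where
  "graph F = {(x, y). y \<in> F x}"

definition regular_coderiv :: "('a::real_inner \<Rightarrow> 'b::real_inner set) \<Rightarrow> 'a \<Rightarrow> 'b \<Rightarrow> 'b \<Rightarrow> 'a set" where
  "regular_coderiv F xbar ybar w = {v. (v, - w) \<in> regular_normal_cone (graph F) (xbar, ybar)}"

definition regular_coderiv_fun :: "('a::real_inner \<Rightarrow> 'b::real_inner) \<Rightarrow> 'a \<Rightarrow> 'b \<Rightarrow> 'a set" where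
  "regular_coderiv_fun f xbar w = regular_coderiv (\<lambda>x. {f x}) xbar (f xbar) w"

definition map_plus :: "('a \<Rightarrow> 'b::plus) \<Rightarrow> ('a \<Rightarrow> 'b set) \<Rightarrow> 'a \<Rightarrow> 'b set" where
  "map_plus f F x = (\<lambda>y. f x + y) ` F x"

definition msum :: "'a::plus set \<Rightarrow> 'a set \<Rightarrow> 'a set" where
  "msum A B = {a + b | a b. a \<in> A \<and> b \<in> B}"

definition calm_at :: "('a::real_normed_vector \<Rightarrow> 'b::real_normed_vector) \<Rightarrow> 'a \<Rightarrow> bool" where
  "calm_at f xbar \<longleftrightarrow> (\<exists>l>0. \<exists>U. open U \<and> xbar \<in> U \<and>
      (\<forall>x\<in>U. norm (f x - f xbar) \<le> l * norm (x - xbar)))"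

end

theory Submission
  imports Defs
begin

text \<open>Membership in a regular normal cone is the one-sided estimate
  \<open>\<langle>v, z - z\<^sub>0\<rangle> \<le> o(\<parallel>z - z\<^sub>0\<parallel>)\<close> along the set. The graphs of \<open>F\<close> and \<open>f + F\<close> correspond
  under \<open>(x, z) \<mapsto> (x, f x + z)\<close>, and calmness of \<open>f\<close> makes the norms of the displacements on
  the two graphs comparable, so such estimates transfer between them; adding the estimate for the
  graph of \<open>f\<close> gives the inclusion. If \<open>f\<close> is differentiable with derivative \<open>f'\<close>, then
  \<open>\<langle>w, f x - f x\<^sub>0 - f' (x - x\<^sub>0)\<rangle> = o(\<parallel>x - x\<^sub>0\<parallel>)\<close> shows \<open>f'\<^sup>* w \<in> D\<^sup>*f(x\<^sub>0)(w)\<close>, and adding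
  the same term splits every \<open>p \<in> D\<^sup>*(f + F)(x\<^sub>0, v\<^sub>0)(w)\<close> as \<open>f'\<^sup>* w + (p - f'\<^sup>* w)\<close>.\<close>

definition le_smallo :: "('a \<Rightarrow> real) \<Rightarrow> ('a \<Rightarrow> real) \<Rightarrow> 'a filter \<Rightarrow> bool" where
  "le_smallo g r F \<longleftrightarrow> (\<forall>e>0. eventually (\<lambda>z. g z \<le> e * r z) F)"

lemma le_smallo_add:
  assumes "le_smallo g r F" "le_smallo h r F"
  shows "le_smallo (\<lambda>z. g z + h z) r F"
  unfolding le_smallo_def
proof (intro allI impI)
  fix e :: real assume "e > 0"
  then have "eventually (\<lambda>z. g z \<le> e/2 * r z) F" "eventually (\<lambda>z. h z \<le> e/2 * r z) F"
    using assms unfolding le_smallo_def by (simp_all del: times_divide_eq_left)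
  then show "eventually (\<lambda>z. g z + h z \<le> e * r z) F"
    by eventually_elim linarith
qed

lemma le_smallo_rescale:
  assumes "le_smallo g r F" "eventually (\<lambda>z. r z \<le> C * s z) F" "C > 0"
  shows "le_smallo g s F"
  unfolding le_smallo_def
proof (intro allI impI)
  fix e :: real assume "e > 0"
  with assms have "eventually (\<lambda>z. g z \<le> e / C * r z) F"
    unfolding le_smallo_def by (simp del: times_divide_eq_left)
  then show "eventually (\<lambda>z. g z \<le> e * s z) F"
    using assms(2)
  proof eventually_elim
    case (elim z)
    have "e / C * r z \<le> e / C * (C * s z)"
      using elim(2) \<open>e > 0\<close> \<open>C > 0\<close> by (intro mult_left_mono) auto
    with elim(1) \<open>C > 0\<close> show ?case by simp
  qed
qed

lemma le_smallo_compose: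
  assumes "le_smallo g r F" "filterlim h F G"
  shows "le_smallo (\<lambda>z. g (h z)) (\<lambda>z. r (h z)) G"
  using assms eventually_compose_filterlim unfolding le_smallo_def by blast

lemma le_smallo_mono:
  assumes "le_smallo g r F" "eventually (\<lambda>z. g' z \<le> g z) F"
  shows "le_smallo g' r F"
  unfolding le_smallo_def
proof (intro allI impI)
  fix e :: real assume "e > 0"
  with assms(1) have "eventually (\<lambda>z. g z \<le> e * r z) F" unfolding le_smallo_def by blast
  with assms(2) show "eventually (\<lambda>z. g' z \<le> e * r z) F"
    by eventually_elim (rule order_trans)
qed

lemma le_smallo_inner_of_norm:
  fixes g :: "'a \<Rightarrow> 'b::real_inner"
  assumes "\<forall>e>0. eventually (\<lambda>z. norm (g z) \<le> e * r z) F"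
  shows "le_smallo (\<lambda>z. inner w (g z)) r F"
  unfolding le_smallo_def
proof (intro allI impI)
  fix e :: real assume "e > 0"
  have "norm w + 1 > 0" by (simp add: add_nonneg_pos)
  with \<open>e > 0\<close> have "eventually (\<lambda>z. norm (g z) \<le> e / (norm w + 1) * r z) F"
    using assms[rule_format, of "e / (norm w + 1)"] by simp
  then show "eventually (\<lambda>z. inner w (g z) \<le> e * r z) F"
  proof eventually_elim
    case (elim z)
    have "inner w (g z) \<le> norm w * norm (g z)" by (rule norm_cauchy_schwarz)
    also have "\<dots> \<le> (norm w + 1) * norm (g z)" by (simp add: mult_right_mono)
    also have "\<dots> \<le> e * r z"
      using elim \<open>norm w + 1 > 0\<close> by (simp add: field_simps)
    finally show ?case .
  qed
qed

text \<open>The filter \<open>nhds z\<^sub>0 \<sqinter> principal \<Omega>\<close> keeps the base point, where both sides vanish; unlike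
  \<open>at z\<^sub>0 within \<Omega>\<close>, it is reached by any map that converges and stays in \<open>\<Omega>\<close>.\<close>

lemma regular_normal_cone_iff_le_smallo:
  "v \<in> regular_normal_cone \<Omega> zb \<longleftrightarrow>
     le_smallo (\<lambda>z. inner v (z - zb)) (\<lambda>z. norm (z - zb)) (inf (nhds zb) (principal \<Omega>))"
  (is "_ \<longleftrightarrow> le_smallo ?g ?r _")
proof -
  have "v \<in> regular_normal_cone \<Omega> zb \<longleftrightarrow>
      (\<forall>y>0. eventually (\<lambda>z. z \<noteq> zb \<longrightarrow> z \<in> \<Omega> \<longrightarrow> ereal (?g z / ?r z) < y) (nhds zb))"
    unfolding regular_normal_cone_def Limsup_le_iff eventually_at_filter by simp
  also have "\<dots> \<longleftrightarrow> (\<forall>e>0. eventually (\<lambda>z. z \<in> \<Omega> \<longrightarrow> ?g z \<le> e * ?r z) (nhds zb))"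
  proof safe
    fix e :: real assume "e > 0" and
      lim: "\<forall>y>0. eventually (\<lambda>z. z \<noteq> zb \<longrightarrow> z \<in> \<Omega> \<longrightarrow> ereal (?g z / ?r z) < y) (nhds zb)"
    from lim[rule_format, of "ereal e"] \<open>e > 0\<close>
    show "eventually (\<lambda>z. z \<in> \<Omega> \<longrightarrow> ?g z \<le> e * ?r z) (nhds zb)"
      by (auto elim!: eventually_mono simp: divide_less_eq)
  next
    fix y :: ereal assume "y > 0" and
      small: "\<forall>e>0. eventually (\<lambda>z. z \<in> \<Omega> \<longrightarrow> ?g z \<le> e * ?r z) (nhds zb)"
    obtain e :: real where "0 < ereal e" "ereal e < y" using ereal_dense2[OF \<open>y > 0\<close>] by blast
    with small have "eventually (\<lambda>z. z \<in> \<Omega> \<longrightarrow> ?g z \<le> e * ?r z) (nhds zb)" by simp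
    then show "eventually (\<lambda>z. z \<noteq> zb \<longrightarrow> z \<in> \<Omega> \<longrightarrow> ereal (?g z / ?r z) < y) (nhds zb)"
    proof eventually_elim
      case (elim z)
      show ?case
      proof (intro impI)
        assume "z \<noteq> zb" "z \<in> \<Omega>"
        then have "?g z / ?r z \<le> e" using elim by (simp add: divide_le_eq)
        then show "ereal (?g z / ?r z) < y" using \<open>ereal e < y\<close> by (meson ereal_less_eq(3) le_less_trans)
      qed
    qed
  qed
  finally show ?thesis unfolding le_smallo_def eventually_inf_principal .
qed

lemma regular_coderiv_iff_le_smallo:
  "v \<in> regular_coderiv F xb yb w \<longleftrightarrow>
     le_smallo (\<lambda>q. inner v (fst q - xb) - inner w (snd q - yb)) (\<lambda>q. norm (q - (xb, yb)))
       (inf (nhds (xb, yb)) (principal (graph F)))"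
proof -
  have "(\<lambda>q. inner (v, - w) (q - (xb, yb))) = (\<lambda>q. inner v (fst q - xb) - inner w (snd q - yb))"
    by (simp add: fun_eq_iff inner_prod_def)
  then show ?thesis
    unfolding regular_coderiv_def regular_normal_cone_iff_le_smallo by simp
qed

lemma le_smallo_regular_coderiv_comp:
  assumes "(h \<longlongrightarrow> (xb, yb)) G" "eventually (\<lambda>q. h q \<in> graph F) G"
    and "eventually (\<lambda>q. norm (h q - (xb, yb)) \<le> C * s q) G" "C > 0"
    and "v \<in> regular_coderiv F xb yb w"
  shows "le_smallo (\<lambda>q. inner v (fst (h q) - xb) - inner w (snd (h q) - yb)) s G"
proof -
  have "filterlim h (inf (nhds (xb, yb)) (principal (graph F))) G"
    using assms(1,2) by (simp add: filterlim_inf filterlim_principal)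
  from le_smallo_compose[OF assms(5)[unfolded regular_coderiv_iff_le_smallo] this]
  have "le_smallo (\<lambda>q. inner v (fst (h q) - xb) - inner w (snd (h q) - yb)) (\<lambda>q. norm (h q - (xb, yb))) G" .
  then show ?thesis using assms(3,4) by (rule le_smallo_rescale)
qed

lemma tendsto_fst_snd_inf_nhds:
  shows "(fst \<longlongrightarrow> a) (inf (nhds (a, b)) F)" and "(snd \<longlongrightarrow> b) (inf (nhds (a, b)) F)"
  using tendsto_fst[OF tendsto_mono[OF inf_le1 filterlim_ident]]
    tendsto_snd[OF tendsto_mono[OF inf_le1 filterlim_ident]] by auto

lemma calm_at_iff_eventually:
  "calm_at f xb \<longleftrightarrow> (\<exists>l>0. eventually (\<lambda>x. norm (f x - f xb) \<le> l * norm (x - xb)) (nhds xb))"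
  unfolding calm_at_def eventually_nhds ..

lemma calm_at_imp_isCont:
  assumes "calm_at f xb"
  shows "isCont f xb"
proof -
  obtain l where "eventually (\<lambda>x. norm (f x - f xb) \<le> l * norm (x - xb)) (nhds xb)"
    using assms unfolding calm_at_iff_eventually by blast
  then have "eventually (\<lambda>x. norm (f x - f xb) \<le> norm (x - xb) * l) (at xb)"
    unfolding eventually_nhds_conv_at by (simp add: mult.commute)
  moreover have "((\<lambda>x. x - xb) \<longlongrightarrow> 0) (at xb)"
    by (rule LIM_zero[OF tendsto_ident_at])
  ultimately have "((\<lambda>x. f x - f xb) \<longlongrightarrow> 0) (at xb)"
    by (rule tendsto_0_le[rotated])
  then show ?thesis
    unfolding isCont_def by (rule LIM_zero_cancel)
qed

lemma has_derivative_remainder: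
  assumes "(f has_derivative f') (at xb)"
  shows "\<forall>e>0. eventually (\<lambda>x. norm (f x - f xb - f' (x - xb)) \<le> e * norm (x - xb)) (nhds xb)"
proof (intro allI impI)
  have "f' 0 = 0"
    using assms has_derivative_bounded_linear linear_simps(3) by blast
  fix e :: real assume "e > 0"
  with assms have "eventually (\<lambda>x. x \<noteq> xb \<longrightarrow> norm (f x - f xb - f' (x - xb)) \<le> e * norm (x - xb)) (nhds xb)"
    unfolding has_derivative_within_alt2 eventually_at_filter by simp
  then show "eventually (\<lambda>x. norm (f x - f xb - f' (x - xb)) \<le> e * norm (x - xb)) (nhds xb)"
  proof (rule eventually_mono)
    fix x assume "x \<noteq> xb \<longrightarrow> norm (f x - f xb - f' (x - xb)) \<le> e * norm (x - xb)"
    with \<open>f' 0 = 0\<close> show "norm (f x - f xb - f' (x - xb)) \<le> e * norm (x - xb)"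
      by (cases "x = xb") simp_all
  qed
qed

lemma has_derivative_imp_calm_at:
  assumes "(f has_derivative f') (at xb)"
  shows "calm_at f xb"
proof -
  obtain K where "K > 0" and K: "\<And>h. norm (f' h) \<le> norm h * K"
    using assms has_derivative_bounded_linear bounded_linear.pos_bounded by blast
  have "eventually (\<lambda>x. norm (f x - f xb - f' (x - xb)) \<le> 1 * norm (x - xb)) (nhds xb)"
    using has_derivative_remainder[OF assms, rule_format, of 1] by simp
  then have "eventually (\<lambda>x. norm (f x - f xb) \<le> (1 + K) * norm (x - xb)) (nhds xb)"
  proof eventually_elim
    case (elim x)
    have "norm (f x - f xb) \<le> norm (f' (x - xb)) + norm (f x - f xb - f' (x - xb))"
      by (rule norm_triangle_sub)
    with elim K[of "x - xb"] show ?case by (simp add: algebra_simps)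
  qed
  with \<open>K > 0\<close> show ?thesis
    unfolding calm_at_iff_eventually by (intro exI[of _ "1 + K"]) simp
qed

lemma norm_Pair_add_calm:
  assumes "norm c \<le> l * norm a" "0 \<le> l"
  shows "norm (a, b + c) \<le> (1 + l) * norm (a, b)"
proof -
  have "norm (a, b + c) = norm ((a, b) + (0, c))" by simp
  also have "\<dots> \<le> norm (a, b) + norm c"
    using norm_triangle_ineq[of "(a, b)" "(0, c)"] by simp
  also have "\<dots> \<le> norm (a, b) + l * norm (a, b)"
    using assms norm_fst_le[of a b] by (meson add_left_mono mult_left_mono order_trans)
  finally show ?thesis by (simp add: algebra_simps)
qed

lemma regular_coderiv_fun_le_smallo:
  fixes f :: "'a::real_inner \<Rightarrow> 'b::real_inner" and yb :: "'c::real_normed_vector"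
  assumes "calm_at f xb" "u \<in> regular_coderiv_fun f xb w"
  shows "le_smallo (\<lambda>q. inner u (fst q - xb) - inner w (f (fst q) - f xb)) (\<lambda>q. norm (q - (xb, yb)))
           (inf (nhds (xb, yb)) (principal S))"
proof -
  obtain l where "l > 0" and calm: "eventually (\<lambda>x. norm (f x - f xb) \<le> l * norm (x - xb)) (nhds xb)"
    using assms(1) unfolding calm_at_iff_eventually by blast
  define G where "G = inf (nhds (xb, yb)) (principal S)"
  have fst_lim: "(fst \<longlongrightarrow> xb) G"
    unfolding G_def by (rule tendsto_fst_snd_inf_nhds(1))
  have f_lim: "((\<lambda>q. f (fst q)) \<longlongrightarrow> f xb) G"
    using isCont_tendsto_compose[OF calm_at_imp_isCont[OF assms(1)] fst_lim] .
  have "eventually (\<lambda>q. norm ((fst q, f (fst q)) - (xb, f xb)) \<le> (1 + l) * norm (q - (xb, yb))) G"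
    using eventually_compose_filterlim[OF calm fst_lim]
  proof eventually_elim
    case (elim q)
    have "norm ((fst q, f (fst q)) - (xb, f xb)) \<le> norm (fst q - xb) + l * norm (fst q - xb)"
      using norm_Pair_le[of "fst q - xb" "f (fst q) - f xb"] elim by simp
    also have "\<dots> \<le> (1 + l) * norm (q - (xb, yb))"
      using mult_left_mono[OF dist_fst_le[of q "(xb, yb)"], of "1 + l"] \<open>l > 0\<close>
      by (simp add: dist_norm ring_distribs)
    finally show ?case .
  qed
  from le_smallo_regular_coderiv_comp[OF tendsto_Pair[OF fst_lim f_lim] _ this _
      assms(2)[unfolded regular_coderiv_fun_def]]
  show ?thesis using \<open>l > 0\<close> unfolding G_def by (simp add: graph_def)
qed

lemma regular_coderiv_map_plus_subset:
  fixes f :: "'a::real_inner \<Rightarrow> 'b::real_inner"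
  assumes "calm_at f xb"
    and u: "u \<in> regular_coderiv_fun f xb w"
    and v: "v \<in> regular_coderiv F xb (vb - f xb) w"
  shows "u + v \<in> regular_coderiv (map_plus f F) xb vb w"
proof -
  obtain l where "l > 0" and calm: "eventually (\<lambda>x. norm (f x - f xb) \<le> l * norm (x - xb)) (nhds xb)"
    using assms(1) unfolding calm_at_iff_eventually by blast
  define G where "G = inf (nhds (xb, vb)) (principal (graph (map_plus f F)))"
  have fst_lim: "(fst \<longlongrightarrow> xb) G" and snd_lim: "(snd \<longlongrightarrow> vb) G"
    unfolding G_def by (rule tendsto_fst_snd_inf_nhds)+
  have f_lim: "((\<lambda>q. f (fst q)) \<longlongrightarrow> f xb) G"
    using isCont_tendsto_compose[OF calm_at_imp_isCont[OF assms(1)] fst_lim] .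
  have "eventually (\<lambda>q. norm ((fst q, snd q - f (fst q)) - (xb, vb - f xb)) \<le> (1 + l) * norm (q - (xb, vb))) G"
    using eventually_compose_filterlim[OF calm fst_lim]
  proof eventually_elim
    case (elim q)
    have "norm (fst q - xb, (snd q - vb) + - (f (fst q) - f xb)) \<le> (1 + l) * norm (fst q - xb, snd q - vb)"
      using elim \<open>l > 0\<close> by (intro norm_Pair_add_calm) (auto simp: norm_minus_commute)
    then show ?case by (cases q) (simp add: algebra_simps)
  qed
  moreover have "eventually (\<lambda>q. (fst q, snd q - f (fst q)) \<in> graph F) G"
    unfolding G_def eventually_inf_principal graph_def map_plus_def
    by (auto intro!: always_eventually)
  ultimately have v_small: "le_smallo (\<lambda>q. inner v (fst q - xb) - inner w ((snd q - f (fst q)) - (vb - f xb)))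
      (\<lambda>q. norm (q - (xb, vb))) G"
    using le_smallo_regular_coderiv_comp[OF tendsto_Pair[OF fst_lim tendsto_diff[OF snd_lim f_lim]] _ _ _ v]
      \<open>l > 0\<close> by simp
  have u_small: "le_smallo (\<lambda>q. inner u (fst q - xb) - inner w (f (fst q) - f xb)) (\<lambda>q. norm (q - (xb, vb))) G"
    unfolding G_def using assms(1) u by (rule regular_coderiv_fun_le_smallo)
  have "(\<lambda>q. inner (u + v) (fst q - xb) - inner w (snd q - vb)) =
      (\<lambda>q. (inner u (fst q - xb) - inner w (f (fst q) - f xb))
         + (inner v (fst q - xb) - inner w ((snd q - f (fst q)) - (vb - f xb))))"
    by (simp add: fun_eq_iff inner_add_left inner_diff_right)
  with le_smallo_add[OF u_small v_small] show ?thesis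
    unfolding regular_coderiv_iff_le_smallo G_def by simp
qed

lemma le_smallo_derivative_remainder:
  fixes f :: "'a::real_normed_vector \<Rightarrow> 'b::real_inner" and yb :: "'c::real_normed_vector"
  assumes "(f has_derivative f') (at xb)"
  shows "le_smallo (\<lambda>q. inner w (f (fst q) - f xb - f' (fst q - xb))) (\<lambda>q. norm (q - (xb, yb)))
           (inf (nhds (xb, yb)) (principal S))"
proof -
  have "filterlim fst (nhds xb) (inf (nhds (xb, yb)) (principal S))"
    by (rule tendsto_fst_snd_inf_nhds(1))
  from le_smallo_compose[OF le_smallo_inner_of_norm[OF has_derivative_remainder[OF assms]] this]
  have "le_smallo (\<lambda>q. inner w (f (fst q) - f xb - f' (fst q - xb))) (\<lambda>q. norm (fst q - xb))
      (inf (nhds (xb, yb)) (principal S))" .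
  moreover have "eventually (\<lambda>q. norm (fst q - xb) \<le> 1 * norm (q - (xb, yb))) (inf (nhds (xb, yb)) (principal S))"
    using dist_fst_le[of _ "(xb, yb)"] by (simp add: dist_norm)
  ultimately show ?thesis by (rule le_smallo_rescale) simp
qed

lemma adjoint_in_regular_coderiv_fun:
  fixes f :: "'a::euclidean_space \<Rightarrow> 'b::euclidean_space"
  assumes "(f has_derivative f') (at xb)"
  shows "adjoint f' w \<in> regular_coderiv_fun f xb w"
proof -
  have "linear f'" using assms has_derivative_linear by blast
  define G where "G = inf (nhds (xb, f xb)) (principal (graph (\<lambda>x. {f x})))"
  have "le_smallo (\<lambda>q. inner (- w) (f (fst q) - f xb - f' (fst q - xb))) (\<lambda>q. norm (q - (xb, f xb))) G"
    unfolding G_def using assms by (rule le_smallo_derivative_remainder)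
  moreover have "eventually (\<lambda>q. inner (adjoint f' w) (fst q - xb) - inner w (snd q - f xb)
      \<le> inner (- w) (f (fst q) - f xb - f' (fst q - xb))) G"
    unfolding G_def eventually_inf_principal graph_def
    by (auto intro!: always_eventually
        simp: adjoint_works[OF \<open>linear f'\<close>] linear_diff[OF \<open>linear f'\<close>] inner_commute inner_diff_right)
  ultimately show ?thesis
    unfolding regular_coderiv_fun_def regular_coderiv_iff_le_smallo G_def
    by (rule le_smallo_mono)
qed

lemma regular_coderiv_map_plus_diff_adjoint:
  fixes f :: "'a::euclidean_space \<Rightarrow> 'b::euclidean_space"
  assumes D: "(f has_derivative f') (at xb)"
    and p: "p \<in> regular_coderiv (map_plus f F) xb vb w"
  shows "p - adjoint f' w \<in> regular_coderiv F xb (vb - f xb) w"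
proof -
  have "linear f'" using D has_derivative_linear by blast
  obtain l where "l > 0" and calm: "eventually (\<lambda>x. norm (f x - f xb) \<le> l * norm (x - xb)) (nhds xb)"
    using has_derivative_imp_calm_at[OF D] unfolding calm_at_iff_eventually by blast
  define zb where "zb = vb - f xb"
  define G where "G = inf (nhds (xb, zb)) (principal (graph F))"
  have fst_lim: "(fst \<longlongrightarrow> xb) G" and snd_lim: "(snd \<longlongrightarrow> zb) G"
    unfolding G_def by (rule tendsto_fst_snd_inf_nhds)+
  have f_lim: "((\<lambda>q. f (fst q)) \<longlongrightarrow> f xb) G"
    using isCont_tendsto_compose[OF has_derivative_continuous[OF D] fst_lim] .
  have h_lim: "((\<lambda>q. (fst q, f (fst q) + snd q)) \<longlongrightarrow> (xb, vb)) G"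
    using tendsto_Pair[OF fst_lim tendsto_add[OF f_lim snd_lim]] by (simp add: zb_def)
  have "eventually (\<lambda>q. norm (fst q - xb, (snd q - zb) + (f (fst q) - f xb)) \<le> (1 + l) * norm (q - (xb, zb))) G"
    using eventually_compose_filterlim[OF calm fst_lim]
  proof eventually_elim
    case (elim q)
    have "norm (fst q - xb, (snd q - zb) + (f (fst q) - f xb)) \<le> (1 + l) * norm (fst q - xb, snd q - zb)"
      using elim \<open>l > 0\<close> by (intro norm_Pair_add_calm) auto
    then show ?case by (cases q) simp
  qed
  then have "eventually (\<lambda>q. norm ((fst q, f (fst q) + snd q) - (xb, vb)) \<le> (1 + l) * norm (q - (xb, zb))) G"
    by (simp add: zb_def algebra_simps)
  moreover have "eventually (\<lambda>q. (fst q, f (fst q) + snd q) \<in> graph (map_plus f F)) G"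
    unfolding G_def eventually_inf_principal graph_def map_plus_def
    by (auto intro!: always_eventually)
  ultimately have p_small: "le_smallo (\<lambda>q. inner p (fst q - xb) - inner w ((f (fst q) + snd q) - vb))
      (\<lambda>q. norm (q - (xb, zb))) G"
    using le_smallo_regular_coderiv_comp[OF h_lim _ _ _ p] \<open>l > 0\<close> by simp
  have rem_small: "le_smallo (\<lambda>q. inner w (f (fst q) - f xb - f' (fst q - xb))) (\<lambda>q. norm (q - (xb, zb))) G"
    unfolding G_def using D by (rule le_smallo_derivative_remainder)
  have "(\<lambda>q. inner (p - adjoint f' w) (fst q - xb) - inner w (snd q - zb)) =
      (\<lambda>q. (inner p (fst q - xb) - inner w ((f (fst q) + snd q) - vb))
         + inner w (f (fst q) - f xb - f' (fst q - xb)))"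
    by (simp add: fun_eq_iff zb_def adjoint_works[OF \<open>linear f'\<close>] inner_commute
        inner_diff_left inner_diff_right inner_add_right linear_diff[OF \<open>linear f'\<close>])
  with le_smallo_add[OF p_small rem_small] show ?thesis
    unfolding regular_coderiv_iff_le_smallo G_def zb_def by simp
qed

theorem lemma6p2:
  fixes f :: "real ^ 'n \<Rightarrow> real ^ 'm"
    and F :: "real ^ 'n \<Rightarrow> (real ^ 'm) set"
    and xbar :: "real ^ 'n" and vbar :: "real ^ 'm"
  assumes "vbar \<in> map_plus f F xbar"
    and "calm_at f xbar"
  shows "(\<forall>w. msum (regular_coderiv_fun f xbar w) (regular_coderiv F xbar (vbar - f xbar) w)
                 \<subseteq> regular_coderiv (map_plus f F) xbar vbar w)
       \<and> (f differentiable (at xbar) \<longrightarrow>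
          (\<forall>w. msum (regular_coderiv_fun f xbar w) (regular_coderiv F xbar (vbar - f xbar) w)
                 = regular_coderiv (map_plus f F) xbar vbar w))"
proof -
  have subset: "msum (regular_coderiv_fun f xbar w) (regular_coderiv F xbar (vbar - f xbar) w)
      \<subseteq> regular_coderiv (map_plus f F) xbar vbar w" for w
    using regular_coderiv_map_plus_subset[OF assms(2)] unfolding msum_def by blast
  moreover have "msum (regular_coderiv_fun f xbar w) (regular_coderiv F xbar (vbar - f xbar) w)
      = regular_coderiv (map_plus f F) xbar vbar w"
    if "f differentiable (at xbar)" for w
  proof
    obtain f' where D: "(f has_derivative f') (at xbar)"
      using \<open>f differentiable (at xbar)\<close> unfolding differentiable_def by blast
    show "regular_coderiv (map_plus f F) xbar vbar w
        \<subseteq> msum (regular_coderiv_fun f xbar w) (regular_coderiv F xbar (vbar - f xbar) w)"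
    proof
      fix p assume p: "p \<in> regular_coderiv (map_plus f F) xbar vbar w"
      have "p = adjoint f' w + (p - adjoint f' w)" by simp
      with adjoint_in_regular_coderiv_fun[OF D] regular_coderiv_map_plus_diff_adjoint[OF D p]
      show "p \<in> msum (regular_coderiv_fun f xbar w) (regular_coderiv F xbar (vbar - f xbar) w)"
        unfolding msum_def by blast
    qed
  qed (rule subset)
  ultimately show ?thesis by blast
qed

end
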